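(* Under the hypotheses of Theorem 3.1 (i.e. $f:\mathbb{R}^d\to\mathbb{R}$ differentiable, bounded below, with $L$-Lipschitz gradient; $\{x_t\}$ generated by the SUM iteration with $\mu\in[0,1)$, $\lambda\in[0,1/(1-\mu)]$, positive step sizes with $\sum_t\eta_t=\infty$, $\sum_t\eta_t^2<\infty$, $\lim_{t\to\infty}\eta_{t-1}/\eta_t=1$; and $\mathbb{E}_t[g_t]=\nabla f(x_t)$, $\mathbb{E}\|g_t\|^2\le G^2$ for all $t$), we have $$\lim_{T\to\infty}\min_{t\in\{1,\dots,T\}}\mathbb{E}\|\nabla f(x_t)\|^2=0\qquad\text{and}\qquad \lim_{T\to\infty}\frac1T\sum_{t=1}^T\mathbb{E}\|\nabla f(x_t)\|^2=0 .$$
   Context: Stochastic unified momentum (SUM) iteration: given $x_1\in\mathbb{R}^d$, set $m_0=0$ and for $t=1,2,\dots$ $$m_t=\mu m_{t-1}-\eta_t g_t,\qquad x_{t+1}=x_t-\lambda\eta_t g_t+(1-\tilde\lambda)m_t,\qquad \tilde\lambda:=(1-\mu)\lambda,$$ where $g_t\in\mathbb{R}^d$ is a random vector (noisy gradient). $\mathbb{E}_t[\cdot]$ denotes the conditional expectation given $g_1,\dots,g_{t-1}$ (so $x_t$ and $m_{t-1}$ are determined by the conditioning), and $\mathbb{E}$ the total expectation. Norms are Euclidean. *)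

theory Defs
  imports "HOL-Probability.Probability"
begin

definition hist :: "'w measure \<Rightarrow> (nat \<Rightarrow> 'w \<Rightarrow> 'a::topological_space) \<Rightarrow> nat \<Rightarrow> 'w measure" where
  "hist M g t = sigma (space M)
     {g s -` A \<inter> space M | s A. 1 \<le> s \<and> s < t \<and> A \<in> sets borel}"

end

theory Submission
  imports Defs
begin

(* With c = 1 - (1 - mu) lam, the point z_t = x_(t+1) + gamma m_t, gamma = c mu / (1 - mu),
   absorbs the momentum buffer and performs plain SGD steps z_(t+1) = z_t - kappa eta_(t+1) g_(t+1)
   with kappa = lam + c + gamma. The descent lemma at z_t, unbiasedness of g_(t+1) given the
   history, and |grad f(x_(t+1)) - grad f(z_t)| <= L gamma |m_t| give
     E f(z_(t+1)) <= E f(z_t) - kappa/2 eta_(t+1) a_t + O(eta_(t+1) h_t^2 + eta_(t+1)^2),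
   where a_t = E|grad f(x_(t+1))|^2 and E|m_t|^2 <= G^2 h_t^2 with h_t = sum_s mu^(t-s) eta_s.
   Since eta_t / eta_(t+1) -> 1, h_t = O(eta_(t+1)), so the error terms are summable and
   sum_t eta_(t+1) a_t < oo. Lipschitz continuity of grad f bounds the growth
   a_(t+1) <= a_t + C eta_(t+1); together with sum_t eta_t = oo and eta_t -> 0 this forces
   a_t -> 0, which is stronger than both claims. *)

lemma descent_lemma:
  fixes f :: "'a::euclidean_space \<Rightarrow> real"
  assumes f_grad: "\<And>z. (f has_derivative (\<lambda>h. grad z \<bullet> h)) (at z)"
    and Lip: "\<And>y z. norm (grad y - grad z) \<le> K * norm (y - z)" and K: "0 \<le> K"
  shows "f y \<le> f x + grad x \<bullet> (y - x) + K * (norm (y - x))\<^sup>2"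
proof -
  define v where "v = y - x"
  define \<phi> where "\<phi> s = f (x + s *\<^sub>R v)" for s :: real
  have \<phi>_deriv: "(\<phi> has_real_derivative (grad (x + s *\<^sub>R v) \<bullet> v)) (at s)" for s
  proof -
    have "((\<lambda>s. x + s *\<^sub>R v) has_derivative (\<lambda>h. h *\<^sub>R v)) (at s)"
      by (auto intro!: derivative_eq_intros)
    from has_derivative_compose[OF this f_grad]
    have "(\<phi> has_derivative (\<lambda>h. h * (grad (x + s *\<^sub>R v) \<bullet> v))) (at s)"
      unfolding \<phi>_def by (simp add: o_def)
    then show ?thesis
      unfolding has_field_derivative_def by (simp add: mult.commute[of _ "grad _ \<bullet> v"])
  qed
  obtain s where s: "0 < s" "s < 1" "\<phi> 1 - \<phi> 0 = grad (x + s *\<^sub>R v) \<bullet> v"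
    using MVT2[of 0 1 \<phi>, OF _ \<phi>_deriv] by auto
  have "(grad (x + s *\<^sub>R v) - grad x) \<bullet> v \<le> norm (grad (x + s *\<^sub>R v) - grad x) * norm v"
    by (rule norm_cauchy_schwarz)
  also have "\<dots> \<le> K * (s * norm v) * norm v"
    using Lip[of "x + s *\<^sub>R v" x] s by (intro mult_right_mono) auto
  also have "\<dots> \<le> K * (norm v)\<^sup>2"
  proof -
    have "s * norm v * norm v \<le> norm v * norm v"
      using s by (intro mult_right_mono mult_left_le_one_le) auto
    then show ?thesis
      using K by (metis mult.assoc mult_left_mono power2_eq_square)
  qed
  finally show ?thesis
    using s unfolding \<phi>_def v_def by (simp add: inner_diff_left)
qed

text \<open>One step of gradient descent with step size 1/(2K) from x cannot go below inf f.\<close>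
lemma grad_norm_sq_le:
  fixes f :: "'a::euclidean_space \<Rightarrow> real"
  assumes f_grad: "\<And>z. (f has_derivative (\<lambda>h. grad z \<bullet> h)) (at z)"
    and Lip: "\<And>y z. norm (grad y - grad z) \<le> K * norm (y - z)" and K: "0 < K"
    and lb: "\<And>z. c \<le> f z"
  shows "(norm (grad x))\<^sup>2 \<le> 4 * K * (f x - c)"
proof -
  define y where "y = x - (1 / (2 * K)) *\<^sub>R grad x"
  have "c \<le> f y" by (rule lb)
  also have "\<dots> \<le> f x + grad x \<bullet> (y - x) + K * (norm (y - x))\<^sup>2"
    using descent_lemma[OF f_grad Lip] K by auto
  also have "\<dots> = f x - (norm (grad x))\<^sup>2 / (4 * K)"
    unfolding y_def using K
    by (simp add: power2_norm_eq_inner[symmetric] power_divide power_mult_distrib field_simps power2_eq_square)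
  finally show ?thesis using K by (simp add: field_simps)
qed

lemma two_mult_le_weighted_squares:
  fixes a b e :: real
  assumes "0 < e"
  shows "2 * a * b \<le> e * a\<^sup>2 + b\<^sup>2 / e"
proof -
  have "0 \<le> (e * a - b)\<^sup>2 / e" using assms by simp
  also have "\<dots> = e * a\<^sup>2 + b\<^sup>2 / e - 2 * a * b"
    using assms by (simp add: power2_eq_square field_simps)
  finally show ?thesis by simp
qed

lemma square_sum_le_weighted:
  fixes \<mu> h e u v :: real
  assumes "0 < h" "0 \<le> \<mu>" "0 \<le> e"
  shows "(\<mu> * u + e * v)\<^sup>2 \<le> (\<mu> * h + e) * (\<mu> * u\<^sup>2 / h + e * v\<^sup>2)"
proof -
  have "(\<mu> * h + e) * (\<mu> * u\<^sup>2 / h + e * v\<^sup>2) - (\<mu> * u + e * v)\<^sup>2 = \<mu> * e * (h * v - u)\<^sup>2 / h"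
    using assms by (simp add: field_simps power2_eq_square)
  moreover have "0 \<le> \<mu> * e * (h * v - u)\<^sup>2 / h" using assms by simp
  ultimately show ?thesis by linarith
qed

lemma sum_le_of_increment_le:
  fixes a e :: "nat \<Rightarrow> real"
  assumes "\<And>t. r \<le> t \<Longrightarrow> a (Suc t) \<le> a t + C * e t"
  shows "a (r + k) \<le> a r + C * sum e {r..<r + k}"
proof (induction k)
  case (Suc k)
  then show ?case using assms[of "r + k"] by (simp add: algebra_simps)
qed simp

lemma not_summable_tail_unbounded:
  fixes e :: "nat \<Rightarrow> real"
  assumes "\<And>t. 0 \<le> e t" "\<not> summable e"
  shows "\<exists>T. B < sum e {N..<T}"
proof (rule ccontr)
  assume "\<not> ?thesis"
  then have bound: "sum e {N..<T} \<le> B" for T by (auto simp: not_less)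
  have "summable (\<lambda>t. e (t + N))"
  proof (rule bounded_imp_summable)
    have "(\<Sum>k\<le>n. e (k + N)) = sum e {N..<Suc n + N}" for n
      by (induction n) (auto simp: add.commute)
    then show "(\<Sum>k\<le>n. e (k + N)) \<le> B" for n
      using bound[of "Suc n + N"] by (simp del: sum.op_ivl_Suc)
  qed (use assms in simp)
  with assms show False by (simp add: summable_iff_shift)
qed

lemma window_with_sum_between:
  fixes e :: "nat \<Rightarrow> real"
  assumes e_nonneg: "\<And>t. 0 \<le> e t" and e_small: "\<And>t. N \<le> t \<Longrightarrow> e t \<le> s / 2"
    and sum_big: "s < sum e {N..<T}"
  shows "\<exists>r. N \<le> r \<and> r \<le> T \<and> s / 2 \<le> sum e {r..<T} \<and> sum e {r..<T} \<le> s"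
proof -
  define P where "P r \<longleftrightarrow> N \<le> r \<and> sum e {r..<T} \<le> s" for r
  have "0 \<le> s" using e_nonneg[of N] e_small[of N] by simp
  then have "N \<le> T" using sum_big by (cases "N \<le> T") auto
  then have "P T" using \<open>0 \<le> s\<close> unfolding P_def by simp
  define r where "r = (LEAST r. P r)"
  have Pr: "P r" unfolding r_def by (rule LeastI[of P, OF \<open>P T\<close>])
  have "r \<le> T" unfolding r_def by (rule Least_le[of P, OF \<open>P T\<close>])
  have "N < r" using Pr sum_big unfolding P_def by (cases "r = N") auto
  have "\<not> P (r - 1)"
    using \<open>N < r\<close> not_less_Least[of "r - 1" P] unfolding r_def by simp
  then have "s < sum e {r - 1..<T}" using \<open>N < r\<close> unfolding P_def by auto
  also have "\<dots> = e (r - 1) + sum e {r..<T}"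
    using \<open>N < r\<close> \<open>r \<le> T\<close> by (subst sum.atLeast_Suc_lessThan) (auto simp: Suc_diff_1)
  moreover have "e (r - 1) \<le> s / 2" using e_small \<open>N < r\<close> by simp
  ultimately have "s / 2 \<le> sum e {r..<T}" by linarith
  then show ?thesis using Pr \<open>r \<le> T\<close> unfolding P_def by blast
qed

lemma weighted_sum_ge_before_peak:
  fixes a e :: "nat \<Rightarrow> real"
  assumes e_nonneg: "\<And>t. 0 \<le> e t" and incr: "\<And>u. r \<le> u \<Longrightarrow> a (Suc u) \<le> a u + D * e u"
    and "0 \<le> D" and peak: "\<epsilon> \<le> a t" and "D * s \<le> \<epsilon> / 2"
    and window: "r \<le> t" "s / 2 \<le> sum e {r..<t}" "sum e {r..<t} \<le> s"
  shows "\<epsilon> * s / 4 \<le> (\<Sum>u=r..<t. e u * a u)"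
proof -
  have a_big: "\<epsilon> / 2 \<le> a u" if u: "r \<le> u" "u < t" for u
  proof -
    have "a (u + (t - u)) \<le> a u + D * sum e {u..<u + (t - u)}"
      using incr u by (intro sum_le_of_increment_le) auto
    then have "a t \<le> a u + D * sum e {u..<t}" using u by simp
    also have "sum e {u..<t} \<le> sum e {r..<t}"
      using u e_nonneg by (intro sum_mono2) auto
    also have "\<dots> \<le> s" by (rule window(3))
    finally have "a t \<le> a u + D * s" using \<open>0 \<le> D\<close> by (simp add: mult_left_mono)
    then show ?thesis using peak \<open>D * s \<le> \<epsilon> / 2\<close> by simp
  qed
  have "0 \<le> s" using window(2,3) by linarith
  then have "0 \<le> \<epsilon>" using mult_nonneg_nonneg[OF \<open>0 \<le> D\<close>] \<open>D * s \<le> \<epsilon> / 2\<close> by fastforce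
  then have "\<epsilon> * s / 4 \<le> \<epsilon> / 2 * sum e {r..<t}"
    using mult_left_mono[OF window(2), of "\<epsilon> / 2"] by simp
  also have "\<dots> = (\<Sum>u=r..<t. e u * (\<epsilon> / 2))" by (simp add: sum_distrib_left mult.commute)
  also have "\<dots> \<le> (\<Sum>u=r..<t. e u * a u)"
    using a_big e_nonneg by (intro sum_mono mult_left_mono) auto
  finally show ?thesis .
qed

text \<open>If a returns above \<open>\<epsilon>\<close> infinitely often, each late peak is preceded by a window of
  e-mass comparable to \<open>\<epsilon>/C\<close> on which \<open>a \<ge> \<epsilon>/2\<close>; these windows contradict the Cauchy
  criterion for \<open>\<Sum> e a\<close>, while the divergence of \<open>\<Sum> e\<close> and \<open>e \<rightarrow> 0\<close> guarantee that
  such windows exist.\<close>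
lemma tendsto_zero_if_weighted_summable:
  fixes a e :: "nat \<Rightarrow> real"
  assumes a_nonneg: "\<And>t. 0 \<le> a t" and e_pos: "\<And>t. 0 < e t"
    and weighted_summable: "summable (\<lambda>t. e t * a t)" and not_summable: "\<not> summable e"
    and e_lim: "e \<longlonglongrightarrow> 0"
    and incr: "\<forall>\<^sub>F t in sequentially. a (Suc t) \<le> a t + C * e t"
  shows "a \<longlonglongrightarrow> 0"
proof (rule LIMSEQ_I)
  fix \<epsilon> :: real assume "0 < \<epsilon>"
  obtain N where N: "\<And>t. N \<le> t \<Longrightarrow> a (Suc t) \<le> a t + C * e t"
    using incr by (auto simp: eventually_sequentially)
  define D where "D = max C 1"
  have "0 < D" unfolding D_def by simp
  have incr_D: "a (Suc t) \<le> a t + D * e t" if "N \<le> t" for t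
    using N[OF that] mult_right_mono[OF max.cobounded1[of C 1] less_imp_le[OF e_pos[of t]]]
    unfolding D_def by simp
  define s where "s = \<epsilon> / (2 * D)"
  have "0 < s" using \<open>0 < \<epsilon>\<close> \<open>0 < D\<close> unfolding s_def by simp
  obtain N2 where N2: "\<And>m n. N2 \<le> m \<Longrightarrow> norm (sum (\<lambda>t. e t * a t) {m..<n}) < \<epsilon> * s / 4"
    using weighted_summable \<open>0 < \<epsilon>\<close> \<open>0 < s\<close> unfolding summable_Cauchy by (meson divide_pos_pos mult_pos_pos zero_less_numeral)
  obtain N3 where N3: "\<And>t. N3 \<le> t \<Longrightarrow> e t \<le> s / 2"
    using LIMSEQ_D[OF e_lim, of "s / 2"] \<open>0 < s\<close> by (force simp: abs_le_iff)
  define N1 where "N1 = max N (max N2 N3)"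
  show "\<exists>n0. \<forall>t\<ge>n0. norm (a t - 0) < \<epsilon>"
  proof (rule ccontr)
    assume "\<not> ?thesis"
    then have often: "\<exists>t\<ge>n0. \<epsilon> \<le> a t" for n0 using a_nonneg by (auto simp: not_less)
    obtain T where "s < sum e {N1..<T}"
      using not_summable_tail_unbounded[OF less_imp_le[OF e_pos] not_summable] by blast
    obtain t where t: "max T N1 \<le> t" "\<epsilon> \<le> a t" using often by blast
    have "sum e {N1..<T} \<le> sum e {N1..<t}"
      using t e_pos by (intro sum_mono2) (auto intro: less_imp_le)
    with \<open>s < sum e {N1..<T}\<close> have "s < sum e {N1..<t}" by linarith
    moreover have "e u \<le> s / 2" if "N1 \<le> u" for u using N3[of u] that unfolding N1_def by simp
    ultimately obtain r where r: "N1 \<le> r" "r \<le> t" "s / 2 \<le> sum e {r..<t}" "sum e {r..<t} \<le> s"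
      using window_with_sum_between[of e N1 s t] e_pos less_imp_le by blast
    have "D * s = \<epsilon> / 2" using \<open>0 < D\<close> unfolding s_def by simp
    then have "\<epsilon> * s / 4 \<le> (\<Sum>u=r..<t. e u * a u)"
      using e_pos incr_D r t(2) \<open>0 < D\<close> unfolding N1_def
      by (intro weighted_sum_ge_before_peak[where r=r and D=D and s=s])  (auto intro: less_imp_le)
    also have "\<dots> < \<epsilon> * s / 4" using N2[of r t] r(1) unfolding N1_def by simp
    finally show False by simp
  qed
qed

lemma cesaro_mean_tendsto_zero:
  fixes a :: "nat \<Rightarrow> real"
  assumes "a \<longlonglongrightarrow> 0"
  shows "(\<lambda>T. (\<Sum>t=1..T. a t) / real T) \<longlonglongrightarrow> 0"
proof (rule LIMSEQ_I)
  fix \<epsilon> :: real assume \<epsilon>: "0 < \<epsilon>"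
  obtain N where N: "\<And>t. N \<le> t \<Longrightarrow> \<bar>a t\<bar> < \<epsilon> / 2"
    using LIMSEQ_D[OF assms, of "\<epsilon> / 2"] \<epsilon> by auto
  define S where "S = (\<Sum>t<N. \<bar>a t\<bar>)"
  obtain K :: nat where K: "2 * S / \<epsilon> < real K" using reals_Archimedean2 by blast
  show "\<exists>n0. \<forall>T\<ge>n0. norm ((\<Sum>t=1..T. a t) / real T - 0) < \<epsilon>"
  proof (intro exI allI impI)
    fix T assume T: "Suc K \<le> T"
    have "\<bar>\<Sum>t=1..T. a t\<bar> \<le> (\<Sum>t=1..T. \<bar>a t\<bar>)" by (rule sum_abs)
    also have "\<dots> \<le> (\<Sum>t\<in>{..<N} \<union> ({1..T} - {..<N}). \<bar>a t\<bar>)" by (intro sum_mono2) auto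
    also have "\<dots> = S + (\<Sum>t\<in>{1..T} - {..<N}. \<bar>a t\<bar>)"
      unfolding S_def by (subst sum.union_disjoint) auto
    also have "(\<Sum>t\<in>{1..T} - {..<N}. \<bar>a t\<bar>) \<le> (\<Sum>t\<in>{1..T} - {..<N}. \<epsilon> / 2)"
      using N by (intro sum_mono) (auto simp: not_less less_imp_le)
    also have "\<dots> \<le> real T * (\<epsilon> / 2)"
      using card_mono[of "{1..T}" "{1..T} - {..<N}"] \<epsilon> by (simp add: mult_right_mono)
    also have "S < real T * (\<epsilon> / 2)"
    proof -
      have "2 * S / \<epsilon> < real T" using K T by linarith
      then show ?thesis using \<epsilon> by (simp add: field_simps)
    qed
    finally show "norm ((\<Sum>t=1..T. a t) / real T - 0) < \<epsilon>"
      using T by (simp add: field_simps)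
  qed
qed

lemma running_min_tendsto_zero:
  fixes a :: "nat \<Rightarrow> real"
  assumes "\<And>t. 0 \<le> a t" and "a \<longlonglongrightarrow> 0"
  shows "(\<lambda>T. Min (a ` {1..T})) \<longlonglongrightarrow> 0"
proof (rule tendsto_sandwich[where f="\<lambda>_. 0" and h=a])
  show "\<forall>\<^sub>F T in sequentially. 0 \<le> Min (a ` {1..T})"
    using eventually_ge_at_top[of "1::nat"] by eventually_elim (auto simp: Min_ge_iff assms(1))
  show "\<forall>\<^sub>F T in sequentially. Min (a ` {1..T}) \<le> a T"
    using eventually_ge_at_top[of "1::nat"] by eventually_elim (auto intro: Min_le)
qed (use assms(2) in auto)

text \<open>\<open>momentum_sum \<mu> \<eta> t = \<Sum>s=1..t. \<mu>^(t-s) * \<eta> s\<close> bounds the norm of the momentum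
  buffer in units of the gradient bound.\<close>
primrec momentum_sum :: "real \<Rightarrow> (nat \<Rightarrow> real) \<Rightarrow> nat \<Rightarrow> real" where
  "momentum_sum \<mu> \<eta> 0 = 0"
| "momentum_sum \<mu> \<eta> (Suc t) = \<mu> * momentum_sum \<mu> \<eta> t + \<eta> (Suc t)"

context
  fixes \<mu> :: real and \<eta> :: "nat \<Rightarrow> real"
  assumes mu_nonneg: "0 \<le> \<mu>" and eta_pos: "\<And>t. 1 \<le> t \<Longrightarrow> 0 < \<eta> t"
begin

lemma momentum_sum_nonneg: "0 \<le> momentum_sum \<mu> \<eta> t"
proof (induction t)
  case (Suc t)
  show ?case using mult_nonneg_nonneg[OF mu_nonneg Suc] eta_pos[of "Suc t"] by simp
qed simp

lemma momentum_sum_pos: "0 < momentum_sum \<mu> \<eta> (Suc t)"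
  using mult_nonneg_nonneg[OF mu_nonneg momentum_sum_nonneg[of t]] eta_pos[of "Suc t"] by simp

lemma momentum_sum_le:
  assumes "\<mu> < 1" and "\<And>t. \<eta> (Suc t) \<le> K"
  shows "momentum_sum \<mu> \<eta> t \<le> K / (1 - \<mu>)"
proof (induction t)
  case 0
  show ?case using assms(1) assms(2)[of 0] eta_pos[of 1] by simp
next
  case (Suc t)
  have "momentum_sum \<mu> \<eta> (Suc t) \<le> \<mu> * (K / (1 - \<mu>)) + K"
    using mult_left_mono[OF Suc mu_nonneg] assms(2)[of t] by simp
  also have "\<dots> = K / (1 - \<mu>)" using assms(1) by (simp add: field_simps)
  finally show ?case .
qed

text \<open>Since \<open>\<eta> t \<le> \<rho> \<eta> (t+1)\<close> eventually for any \<open>\<rho> > 1\<close>, choosing \<open>\<rho> \<mu> < 1\<close> makes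
  \<open>B \<eta> (t+1)\<close> an inductive upper bound once B is large.\<close>
lemma momentum_sum_le_step:
  assumes "\<mu> < 1" and ratio: "(\<lambda>t. \<eta> t / \<eta> (t + 1)) \<longlonglongrightarrow> 1"
  shows "\<exists>B. \<forall>\<^sub>F t in sequentially. momentum_sum \<mu> \<eta> t \<le> B * \<eta> (Suc t)"
proof -
  define \<rho> where "\<rho> = 2 / (1 + \<mu>)"
  have "1 < \<rho>" "\<rho> * \<mu> < 1" using mu_nonneg \<open>\<mu> < 1\<close> unfolding \<rho>_def by (simp_all add: field_simps)
  obtain N0 where N0: "\<And>t. N0 \<le> t \<Longrightarrow> \<bar>\<eta> t / \<eta> (t + 1) - 1\<bar> < \<rho> - 1"
    using LIMSEQ_D[OF ratio, of "\<rho> - 1"] \<open>1 < \<rho>\<close> by auto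
  have ratio_le: "\<eta> t \<le> \<rho> * \<eta> (Suc t)" if "N0 \<le> t" for t
    using N0[OF that] eta_pos[of "Suc t"] by (simp add: field_simps abs_less_iff)
  define N where "N = max N0 1"
  define B where "B = max (momentum_sum \<mu> \<eta> N / \<eta> (Suc N)) (\<rho> / (1 - \<rho> * \<mu>))"
  have "0 < B"
    using \<open>1 < \<rho>\<close> \<open>\<rho> * \<mu> < 1\<close> unfolding B_def by (simp add: less_max_iff_disj)
  have B_inv: "\<rho> * (\<mu> * B + 1) \<le> B"
  proof -
    have "\<rho> / (1 - \<rho> * \<mu>) \<le> B" unfolding B_def by simp
    then have "\<rho> \<le> B * (1 - \<rho> * \<mu>)" using \<open>\<rho> * \<mu> < 1\<close> by (simp add: field_simps)
    then show ?thesis by (simp add: algebra_simps)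
  qed
  have "momentum_sum \<mu> \<eta> (N + k) \<le> B * \<eta> (Suc (N + k))" for k
  proof (induction k)
    case 0
    have "momentum_sum \<mu> \<eta> N / \<eta> (Suc N) \<le> B" unfolding B_def by simp
    then show ?case using eta_pos[of "Suc N"] by (simp add: field_simps)
  next
    case (Suc k)
    define t where "t = N + k"
    have "momentum_sum \<mu> \<eta> (Suc t) \<le> (\<mu> * B + 1) * \<eta> (Suc t)"
      using mult_left_mono[OF Suc[folded t_def] mu_nonneg] by (simp add: algebra_simps)
    also have "\<dots> \<le> (\<mu> * B + 1) * (\<rho> * \<eta> (Suc (Suc t)))"
      using ratio_le[of "Suc t"] mu_nonneg \<open>0 < B\<close> unfolding t_def N_def by (intro mult_left_mono) auto
    also have "\<dots> \<le> B * \<eta> (Suc (Suc t))"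
      using mult_right_mono[OF B_inv, of "\<eta> (Suc (Suc t))"] eta_pos[of "Suc (Suc t)"] by (simp add: ac_simps)
    finally show ?case unfolding t_def by simp
  qed
  then have "\<forall>t\<ge>N. momentum_sum \<mu> \<eta> t \<le> B * \<eta> (Suc t)" by (metis le_add_diff_inverse)
  then show ?thesis by (auto simp: eventually_sequentially)
qed

end

lemma integrable_if_abs_le:
  fixes p :: "'w \<Rightarrow> real"
  assumes "integrable M q" "p \<in> borel_measurable M" "\<And>\<omega>. \<omega> \<in> space M \<Longrightarrow> \<bar>p \<omega>\<bar> \<le> q \<omega>"
  shows "integrable M p"
  using assms by (intro Bochner_Integration.integrable_bound[OF assms(1,2)] AE_I2) force

lemma integrable_if_le_norm_mult:
  fixes p :: "'w \<Rightarrow> real" and v w :: "'w \<Rightarrow> 'a::real_normed_vector"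
  assumes "integrable M (\<lambda>\<omega>. (norm (v \<omega>))\<^sup>2)" "integrable M (\<lambda>\<omega>. (norm (w \<omega>))\<^sup>2)"
    and "p \<in> borel_measurable M" and "\<And>\<omega>. \<omega> \<in> space M \<Longrightarrow> \<bar>p \<omega>\<bar> \<le> norm (v \<omega>) * norm (w \<omega>)"
  shows "integrable M p"
proof (rule integrable_if_abs_le[OF _ assms(3)])
  show "integrable M (\<lambda>\<omega>. ((norm (v \<omega>))\<^sup>2 + (norm (w \<omega>))\<^sup>2) / 2)" using assms(1,2) by simp
  show "\<bar>p \<omega>\<bar> \<le> ((norm (v \<omega>))\<^sup>2 + (norm (w \<omega>))\<^sup>2) / 2" if "\<omega> \<in> space M" for \<omega>
    using assms(4)[OF that] sum_squares_bound[of "norm (v \<omega>)" "norm (w \<omega>)"] by simp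
qed

locale sum_iteration =
  fixes M :: "'w measure"
    and f :: "'a::euclidean_space \<Rightarrow> real"
    and grad :: "'a \<Rightarrow> 'a"
    and L G \<mu> lam :: real
    and \<eta> :: "nat \<Rightarrow> real"
    and g x m :: "nat \<Rightarrow> 'w \<Rightarrow> 'a"
  assumes M: "prob_space M"
    and f_grad: "\<And>z. (f has_derivative (\<lambda>h. grad z \<bullet> h)) (at z)"
    and f_bdd: "bdd_below (range f)"
    and Lip: "\<And>y z. norm (grad y - grad z) \<le> L * norm (y - z)"
    and mu: "0 \<le> \<mu>" "\<mu> < 1"
    and lam: "0 \<le> lam" "lam \<le> 1 / (1 - \<mu>)"
    and eta_pos: "\<And>t. t \<ge> 1 \<Longrightarrow> \<eta> t > 0"
    and eta_div: "\<not> summable (\<lambda>t. \<eta> (t + 1))"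
    and eta_sq: "summable (\<lambda>t. (\<eta> (t + 1))\<^sup>2)"
    and eta_ratio: "(\<lambda>t. \<eta> t / \<eta> (t + 1)) \<longlonglongrightarrow> 1"
    and x1: "\<exists>x1. \<forall>\<omega>\<in>space M. x 1 \<omega> = x1"
    and m0: "\<forall>\<omega>\<in>space M. m 0 \<omega> = 0"
    and m_step: "\<And>t \<omega>. t \<ge> 1 \<Longrightarrow> \<omega> \<in> space M \<Longrightarrow>
                   m t \<omega> = \<mu> *\<^sub>R m (t - 1) \<omega> - \<eta> t *\<^sub>R g t \<omega>"
    and x_step: "\<And>t \<omega>. t \<ge> 1 \<Longrightarrow> \<omega> \<in> space M \<Longrightarrow>
                   x (t + 1) \<omega> = x t \<omega> - (lam * \<eta> t) *\<^sub>R g t \<omega>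
                                  + (1 - (1 - \<mu>) * lam) *\<^sub>R m t \<omega>"
    and g_meas: "\<And>t. t \<ge> 1 \<Longrightarrow> g t \<in> borel_measurable M"
    and g_unbiased: "\<And>t b. t \<ge> 1 \<Longrightarrow> b \<in> Basis \<Longrightarrow>
                   AE \<omega> in M. real_cond_exp M (hist M g t) (\<lambda>\<omega>. g t \<omega> \<bullet> b) \<omega>
                                = grad (x t \<omega>) \<bullet> b"
    and g_sq_int: "\<And>t. t \<ge> 1 \<Longrightarrow> integrable M (\<lambda>\<omega>. (norm (g t \<omega>))\<^sup>2)"
    and g_bdd: "\<And>t. t \<ge> 1 \<Longrightarrow> integral\<^sup>L M (\<lambda>\<omega>. (norm (g t \<omega>))\<^sup>2) \<le> G\<^sup>2"
begin

interpretation prob_space M by (rule M)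

abbreviation mean_sq :: "('w \<Rightarrow> 'b::real_normed_vector) \<Rightarrow> real" where
  "mean_sq v \<equiv> integral\<^sup>L M (\<lambda>\<omega>. (norm (v \<omega>))\<^sup>2)"

abbreviation sq_integrable :: "('w \<Rightarrow> 'b::real_normed_vector) \<Rightarrow> bool" where
  "sq_integrable v \<equiv> integrable M (\<lambda>\<omega>. (norm (v \<omega>))\<^sup>2)"

lemma hist_generator_subset:
  "{g s -` A \<inter> space M | s A. 1 \<le> s \<and> s < t \<and> A \<in> sets borel} \<subseteq> sets M"
  using g_meas by (auto intro: measurable_sets)

lemma space_hist [simp]: "space (hist M g t) = space M"
  unfolding hist_def by (simp add: space_measure_of_conv)

lemma sets_hist:
  "sets (hist M g t) = sigma_sets (space M) {g s -` A \<inter> space M | s A. 1 \<le> s \<and> s < t \<and> A \<in> sets borel}"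
  unfolding hist_def using hist_generator_subset[of t] sets.sets_into_space
  by (intro sets_measure_of) blast

lemma subalgebra_hist: "subalgebra M (hist M g t)"
  unfolding subalgebra_def using sets_hist hist_generator_subset
  by (simp add: sets.sigma_sets_subset)

lemma sigma_finite_subalgebra_hist: "sigma_finite_subalgebra M (hist M g t)"
  by (intro finite_measure_subalgebra_is_sigma_finite)
     (simp add: finite_measure_subalgebra_def finite_measure_subalgebra_axioms_def
       subalgebra_hist finite_measure_axioms)

lemma g_measurable_hist: "1 \<le> s \<Longrightarrow> s < t \<Longrightarrow> g s \<in> borel_measurable (hist M g t)"
  by (rule measurableI) (auto simp: sets_hist intro!: sigma_sets.Basic)

text \<open>Stated for an arbitrary N on the sample space so that it yields measurability both with
  respect to M and with respect to the history \<open>hist M g t\<close>.\<close>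
lemma iterates_measurable:
  assumes space_N: "space N = space M" and g_N: "\<And>s. 1 \<le> s \<Longrightarrow> s < t \<Longrightarrow> g s \<in> borel_measurable N"
  shows "\<And>s. s < t \<Longrightarrow> m s \<in> borel_measurable N"
    and "\<And>s. 1 \<le> s \<Longrightarrow> s \<le> t \<Longrightarrow> x s \<in> borel_measurable N"
proof -
  show m_N: "s < t \<Longrightarrow> m s \<in> borel_measurable N" for s
  proof (induction s)
    case 0
    then show ?case using m0 space_N by (subst measurable_cong[where g="\<lambda>_. 0"]) auto
  next
    case (Suc s)
    have [measurable]: "m s \<in> borel_measurable N" "g (Suc s) \<in> borel_measurable N"
      using Suc g_N by auto
    show ?case using space_N m_step[of "Suc s"]
      by (subst measurable_cong[where g="\<lambda>\<omega>. \<mu> *\<^sub>R m s \<omega> - \<eta> (Suc s) *\<^sub>R g (Suc s) \<omega>"]) auto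
  qed
  show "1 \<le> s \<Longrightarrow> s \<le> t \<Longrightarrow> x s \<in> borel_measurable N" for s
  proof (induction s)
    case (Suc s)
    show ?case
    proof (cases "s = 0")
      case True
      obtain x1' where "\<forall>\<omega>\<in>space M. x 1 \<omega> = x1'" using x1 by blast
      then show ?thesis using True space_N by (subst measurable_cong[where g="\<lambda>_. x1'"]) auto
    next
      case False
      have [measurable]: "x s \<in> borel_measurable N" "g s \<in> borel_measurable N" "m s \<in> borel_measurable N"
        using Suc False g_N m_N by auto
      show ?thesis using space_N x_step[of s] False
        by (subst measurable_cong[where g="\<lambda>\<omega>. x s \<omega> - (lam * \<eta> s) *\<^sub>R g s \<omega>
              + (1 - (1 - \<mu>) * lam) *\<^sub>R m s \<omega>"]) auto
    qed
  qed simp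
qed

lemma g_Suc_measurable [measurable]: "g (Suc s) \<in> borel_measurable M"
  using g_meas by simp

lemma m_measurable [measurable]: "m s \<in> borel_measurable M"
  using iterates_measurable(1)[of M "Suc s" s] g_meas by auto

lemma x_measurable [measurable]: "1 \<le> s \<Longrightarrow> x s \<in> borel_measurable M"
  using iterates_measurable(2)[of M s s] g_meas by auto

lemma m_measurable_hist: "s < t \<Longrightarrow> m s \<in> borel_measurable (hist M g t)"
  using iterates_measurable(1)[of "hist M g t" t s] g_measurable_hist by auto

lemma x_measurable_hist: "1 \<le> s \<Longrightarrow> s \<le> t \<Longrightarrow> x s \<in> borel_measurable (hist M g t)"
  using iterates_measurable(2)[of "hist M g t" t s] g_measurable_hist by auto

text \<open>The hypotheses do not force \<open>L > 0\<close>; K is a positive Lipschitz constant.\<close>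
definition K :: real where "K = \<bar>L\<bar> + 1"

lemma K_pos: "0 < K" unfolding K_def by simp

lemma grad_lipschitz: "norm (grad y - grad z) \<le> K * norm (y - z)"
  using Lip[of y z] mult_right_mono[OF _ norm_ge_zero, of L K "y - z"] unfolding K_def by linarith

lemma grad_measurable [measurable]: "grad \<in> borel_measurable borel"
proof (rule borel_measurable_continuous_onI)
  have "K-lipschitz_on UNIV grad"
    using grad_lipschitz K_pos by (intro lipschitz_onI) (auto simp: dist_norm)
  then show "continuous_on UNIV grad" by (rule lipschitz_on_continuous_on)
qed

lemma f_measurable [measurable]: "f \<in> borel_measurable borel"
  using f_grad by (intro borel_measurable_continuous_onI continuous_at_imp_continuous_on ballI
      has_derivative_continuous) auto

definition f_inf :: real where "f_inf = Inf (range f)"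

lemma f_inf_le: "f_inf \<le> f z"
  unfolding f_inf_def using f_bdd by (intro cInf_lower) auto

lemma descent: "f y \<le> f z + grad z \<bullet> (y - z) + K * (norm (y - z))\<^sup>2"
  using descent_lemma[OF f_grad grad_lipschitz] K_pos by auto

lemma grad_norm_sq_le_gap: "(norm (grad z))\<^sup>2 \<le> 4 * K * (f z - f_inf)"
  using grad_norm_sq_le[OF f_grad grad_lipschitz K_pos f_inf_le] .

abbreviation h :: "nat \<Rightarrow> real" where "h \<equiv> momentum_sum \<mu> \<eta>"

lemma h_nonneg: "0 \<le> h t" using momentum_sum_nonneg[OF mu(1) eta_pos] .

lemma h_pos: "0 < h (Suc t)" using momentum_sum_pos[OF mu(1) eta_pos] .

lemma m_norm_Suc_le:
  "\<omega> \<in> space M \<Longrightarrow> norm (m (Suc n) \<omega>) \<le> \<mu> * norm (m n \<omega>) + \<eta> (Suc n) * norm (g (Suc n) \<omega>)"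
  using m_step[of "Suc n" \<omega>] norm_triangle_ineq4[of "\<mu> *\<^sub>R m n \<omega>" "\<eta> (Suc n) *\<^sub>R g (Suc n) \<omega>"]
    mu(1) eta_pos[of "Suc n"] by simp

lemma m_second_moment_1: "sq_integrable (m 1) \<and> mean_sq (m 1) \<le> G\<^sup>2 * (h 1)\<^sup>2"
proof -
  have m_eq: "(norm (m 1 \<omega>))\<^sup>2 = (\<eta> 1)\<^sup>2 * (norm (g 1 \<omega>))\<^sup>2" if "\<omega> \<in> space M" for \<omega>
    using m_step[of 1 \<omega>] m0 that eta_pos[of 1] by (simp add: power_mult_distrib)
  have "sq_integrable (m 1)"
    using g_sq_int[of 1] by (subst Bochner_Integration.integrable_cong[OF refl m_eq]) auto
  moreover have "mean_sq (m 1) = (\<eta> 1)\<^sup>2 * mean_sq (g 1)"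
    by (subst Bochner_Integration.integral_cong[OF refl m_eq]) auto
  moreover have "(\<eta> 1)\<^sup>2 * mean_sq (g 1) \<le> (\<eta> 1)\<^sup>2 * G\<^sup>2" using g_bdd[of 1] by (intro mult_left_mono) auto
  ultimately show ?thesis by (simp add: mult.commute)
qed

lemma m_second_moment_Suc:
  assumes m_int: "sq_integrable (m n)" and m_le: "mean_sq (m n) \<le> G\<^sup>2 * (h n)\<^sup>2" and "0 < h n"
  shows "sq_integrable (m (Suc n)) \<and> mean_sq (m (Suc n)) \<le> G\<^sup>2 * (h (Suc n))\<^sup>2"
proof -
  have g_int: "sq_integrable (g (Suc n))" and g_le: "mean_sq (g (Suc n)) \<le> G\<^sup>2"
    using g_sq_int g_bdd by simp_all
  define R where "R \<omega> = h (Suc n) * (\<mu> * (norm (m n \<omega>))\<^sup>2 / h n + \<eta> (Suc n) * (norm (g (Suc n) \<omega>))\<^sup>2)"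
    for \<omega>
  have R_int: "integrable M R" unfolding R_def using m_int g_int by auto
  have m_le_R: "(norm (m (Suc n) \<omega>))\<^sup>2 \<le> R \<omega>" if "\<omega> \<in> space M" for \<omega>
  proof -
    have "(norm (m (Suc n) \<omega>))\<^sup>2 \<le> (\<mu> * norm (m n \<omega>) + \<eta> (Suc n) * norm (g (Suc n) \<omega>))\<^sup>2"
      using m_norm_Suc_le[OF that] by (intro power_mono) auto
    also have "\<dots> \<le> R \<omega>"
      unfolding R_def using square_sum_le_weighted[OF \<open>0 < h n\<close> mu(1), of "\<eta> (Suc n)"] eta_pos[of "Suc n"]
      by simp
    finally show ?thesis .
  qed
  have m_Suc_int: "sq_integrable (m (Suc n))"
    using m_le_R by (intro integrable_if_abs_le[OF R_int]) auto
  have "mean_sq (m (Suc n)) \<le> integral\<^sup>L M R"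
    using m_le_R by (intro integral_mono[OF m_Suc_int R_int])
  also have "\<dots> = h (Suc n) * (\<mu> * mean_sq (m n) / h n + \<eta> (Suc n) * mean_sq (g (Suc n)))"
    unfolding R_def using m_int g_int by simp
  also have "\<dots> \<le> h (Suc n) * (\<mu> * (G\<^sup>2 * (h n)\<^sup>2) / h n + \<eta> (Suc n) * G\<^sup>2)"
    using m_le g_le \<open>0 < h n\<close> eta_pos[of "Suc n"] mu h_nonneg[of "Suc n"]
    by (intro mult_left_mono add_mono divide_right_mono) auto
  also have "\<dots> = G\<^sup>2 * (h (Suc n))\<^sup>2" using \<open>0 < h n\<close> by (simp add: power2_eq_square field_simps)
  finally show ?thesis using m_Suc_int by simp
qed

lemma m_second_moment: "sq_integrable (m n) \<and> mean_sq (m n) \<le> G\<^sup>2 * (h n)\<^sup>2"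
proof (induction n)
  case 0
  have "sq_integrable (m 0) = integrable M (\<lambda>_. 0::real)"
    using m0 by (intro Bochner_Integration.integrable_cong) auto
  moreover have "mean_sq (m 0) = integral\<^sup>L M (\<lambda>_. 0::real)"
    using m0 by (intro Bochner_Integration.integral_cong) auto
  ultimately show ?case by simp
next
  case (Suc n)
  show ?case
  proof (cases n)
    case 0
    then show ?thesis using m_second_moment_1 by simp
  next
    case (Suc k)
    then show ?thesis using m_second_moment_Suc Suc.IH h_pos by blast
  qed
qed

lemma integral_inner_unbiased:
  assumes t: "1 \<le> t" and v_hist: "v \<in> borel_measurable (hist M g t)"
    and v_int: "sq_integrable v" and grad_int: "sq_integrable (\<lambda>\<omega>. grad (x t \<omega>))"
  shows "integrable M (\<lambda>\<omega>. v \<omega> \<bullet> g t \<omega>)" "integrable M (\<lambda>\<omega>. v \<omega> \<bullet> grad (x t \<omega>))"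
    and "integral\<^sup>L M (\<lambda>\<omega>. v \<omega> \<bullet> g t \<omega>) = integral\<^sup>L M (\<lambda>\<omega>. v \<omega> \<bullet> grad (x t \<omega>))"
proof -
  interpret S: sigma_finite_subalgebra M "hist M g t" by (rule sigma_finite_subalgebra_hist)
  have [measurable]: "v \<in> borel_measurable M" "g t \<in> borel_measurable M" "x t \<in> borel_measurable M"
    using measurable_from_subalg[OF subalgebra_hist v_hist] g_meas t by auto
  have g_int: "sq_integrable (g t)" using g_sq_int t by simp
  have coord_le: "\<bar>(v \<omega> \<bullet> b) * (w \<bullet> b)\<bar> \<le> norm (v \<omega>) * norm w" if "b \<in> Basis" for \<omega> b and w :: 'a
    unfolding abs_mult using Basis_le_norm[OF that] by (intro mult_mono) auto
  have int_g: "integrable M (\<lambda>\<omega>. (v \<omega> \<bullet> b) * (g t \<omega> \<bullet> b))" if "b \<in> Basis" for b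
    using coord_le[OF that] by (intro integrable_if_le_norm_mult[OF v_int g_int]) auto
  have int_grad: "integrable M (\<lambda>\<omega>. (v \<omega> \<bullet> b) * (grad (x t \<omega>) \<bullet> b))" if "b \<in> Basis" for b
    using coord_le[OF that] by (intro integrable_if_le_norm_mult[OF v_int grad_int]) auto
  have coord_eq: "integral\<^sup>L M (\<lambda>\<omega>. (v \<omega> \<bullet> b) * (g t \<omega> \<bullet> b))
      = integral\<^sup>L M (\<lambda>\<omega>. (v \<omega> \<bullet> b) * (grad (x t \<omega>) \<bullet> b))" if b: "b \<in> Basis" for b
  proof -
    have v_b: "(\<lambda>\<omega>. v \<omega> \<bullet> b) \<in> borel_measurable (hist M g t)" using v_hist by measurable
    have "integral\<^sup>L M (\<lambda>\<omega>. (v \<omega> \<bullet> b) * (g t \<omega> \<bullet> b))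
        = integral\<^sup>L M (\<lambda>\<omega>. (v \<omega> \<bullet> b) * real_cond_exp M (hist M g t) (\<lambda>\<omega>. g t \<omega> \<bullet> b) \<omega>)"
      by (rule S.real_cond_exp_intg(2)[OF int_g[OF b] v_b, symmetric]) measurable
    also have "\<dots> = integral\<^sup>L M (\<lambda>\<omega>. (v \<omega> \<bullet> b) * (grad (x t \<omega>) \<bullet> b))"
    proof (rule integral_cong_AE)
      show "AE \<omega> in M. (v \<omega> \<bullet> b) * real_cond_exp M (hist M g t) (\<lambda>\<omega>. g t \<omega> \<bullet> b) \<omega>
          = (v \<omega> \<bullet> b) * (grad (x t \<omega>) \<bullet> b)"
        using g_unbiased[OF t b] by eventually_elim simp
    qed measurable
    finally show ?thesis .
  qed
  have inner_g: "(\<lambda>\<omega>. v \<omega> \<bullet> g t \<omega>) = (\<lambda>\<omega>. \<Sum>b\<in>Basis. (v \<omega> \<bullet> b) * (g t \<omega> \<bullet> b))"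
    and inner_grad: "(\<lambda>\<omega>. v \<omega> \<bullet> grad (x t \<omega>)) = (\<lambda>\<omega>. \<Sum>b\<in>Basis. (v \<omega> \<bullet> b) * (grad (x t \<omega>) \<bullet> b))"
    by (rule ext, rule euclidean_inner)+
  show "integrable M (\<lambda>\<omega>. v \<omega> \<bullet> g t \<omega>)" "integrable M (\<lambda>\<omega>. v \<omega> \<bullet> grad (x t \<omega>))"
    unfolding inner_g inner_grad using int_g int_grad by auto
  show "integral\<^sup>L M (\<lambda>\<omega>. v \<omega> \<bullet> g t \<omega>) = integral\<^sup>L M (\<lambda>\<omega>. v \<omega> \<bullet> grad (x t \<omega>))"
    unfolding inner_g inner_grad using int_g int_grad coord_eq by (simp add: Bochner_Integration.integral_sum)
qed

definition c :: real where "c = 1 - (1 - \<mu>) * lam"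
definition \<gamma> :: real where "\<gamma> = c * \<mu> / (1 - \<mu>)"
definition \<kappa> :: real where "\<kappa> = lam + c + \<gamma>"

lemma c_nonneg: "0 \<le> c"
proof -
  have "(1 - \<mu>) * lam \<le> (1 - \<mu>) * (1 / (1 - \<mu>))" using lam mu by (intro mult_left_mono) auto
  then show ?thesis using mu unfolding c_def by simp
qed

lemma \<gamma>_nonneg: "0 \<le> \<gamma>" unfolding \<gamma>_def using c_nonneg mu by simp

lemma \<kappa>_pos: "0 < \<kappa>"
proof -
  have "lam + c = 1 + \<mu> * lam" unfolding c_def by (simp add: algebra_simps)
  then show ?thesis unfolding \<kappa>_def using \<gamma>_nonneg mu lam by (smt (verit) mult_nonneg_nonneg)
qed

text \<open>\<open>z n\<close> corresponds to time \<open>n + 1\<close>: the momentum buffer is folded into the iterate so that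
  z performs plain SGD steps with step size \<open>\<kappa> \<eta>\<close>.\<close>
definition z :: "nat \<Rightarrow> 'w \<Rightarrow> 'a" where "z n \<omega> = x (Suc n) \<omega> + \<gamma> *\<^sub>R m n \<omega>"

lemma z_0: "\<omega> \<in> space M \<Longrightarrow> z 0 \<omega> = x 1 \<omega>"
  unfolding z_def using m0 by simp

lemma z_Suc: "\<omega> \<in> space M \<Longrightarrow> z (Suc n) \<omega> = z n \<omega> - (\<kappa> * \<eta> (Suc n)) *\<^sub>R g (Suc n) \<omega>"
proof -
  assume \<omega>: "\<omega> \<in> space M"
  have x_Suc: "x (Suc (Suc n)) \<omega> = x (Suc n) \<omega> - (lam * \<eta> (Suc n)) *\<^sub>R g (Suc n) \<omega> + c *\<^sub>R m (Suc n) \<omega>"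
    using x_step[of "Suc n" \<omega>] \<omega> unfolding c_def by simp
  have m_Suc: "m (Suc n) \<omega> = \<mu> *\<^sub>R m n \<omega> - \<eta> (Suc n) *\<^sub>R g (Suc n) \<omega>"
    using m_step[of "Suc n" \<omega>] \<omega> by simp
  have "z (Suc n) \<omega> = x (Suc n) \<omega> + ((c + \<gamma>) * \<mu>) *\<^sub>R m n \<omega> - ((lam + c + \<gamma>) * \<eta> (Suc n)) *\<^sub>R g (Suc n) \<omega>"
    unfolding z_def x_Suc m_Suc by (simp add: algebra_simps)
  also have "(c + \<gamma>) * \<mu> = \<gamma>" unfolding \<gamma>_def using mu by (simp add: field_simps)
  finally show ?thesis unfolding z_def \<kappa>_def by simp
qed

lemma z_measurable [measurable]: "z n \<in> borel_measurable M"
  unfolding z_def by measurable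

lemma z_measurable_hist: "z n \<in> borel_measurable (hist M g (Suc n))"
proof -
  have [measurable]: "x (Suc n) \<in> borel_measurable (hist M g (Suc n))"
      "m n \<in> borel_measurable (hist M g (Suc n))"
    by (auto intro: x_measurable_hist m_measurable_hist)
  show ?thesis unfolding z_def by measurable
qed

lemma norm_grad_x_minus_grad_z: "norm (grad (x (Suc n) \<omega>) - grad (z n \<omega>)) \<le> K * \<gamma> * norm (m n \<omega>)"
proof -
  have "norm (x (Suc n) \<omega> - z n \<omega>) = \<gamma> * norm (m n \<omega>)" unfolding z_def using \<gamma>_nonneg by simp
  then show ?thesis using grad_lipschitz[of "x (Suc n) \<omega>" "z n \<omega>"] by (simp add: mult.assoc)
qed

lemma grad_x_sq_le:
  "(norm (grad (x (Suc n) \<omega>)))\<^sup>2 \<le> 2 * (norm (grad (z n \<omega>)))\<^sup>2 + 2 * (K * \<gamma>)\<^sup>2 * (norm (m n \<omega>))\<^sup>2"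
proof -
  have "norm (grad (x (Suc n) \<omega>)) \<le> norm (grad (z n \<omega>)) + K * \<gamma> * norm (m n \<omega>)"
    using norm_triangle_ineq2[of "grad (x (Suc n) \<omega>)" "grad (z n \<omega>)"] norm_grad_x_minus_grad_z[of n \<omega>]
    by simp
  then have "(norm (grad (x (Suc n) \<omega>)))\<^sup>2 \<le> (norm (grad (z n \<omega>)) + K * \<gamma> * norm (m n \<omega>))\<^sup>2"
    by (intro power_mono) auto
  also have "\<dots> \<le> 2 * (norm (grad (z n \<omega>)))\<^sup>2 + 2 * (K * \<gamma> * norm (m n \<omega>))\<^sup>2"
    using sum_squares_bound[of "norm (grad (z n \<omega>))" "K * \<gamma> * norm (m n \<omega>)"]
    by (simp add: power2_eq_square algebra_simps)
  finally show ?thesis by (simp add: power_mult_distrib)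
qed

lemma f_z_Suc_le:
  "\<omega> \<in> space M \<Longrightarrow> f (z (Suc n) \<omega>) \<le> f (z n \<omega>) - (\<kappa> * \<eta> (Suc n)) * (grad (z n \<omega>) \<bullet> g (Suc n) \<omega>)
      + K * (\<kappa> * \<eta> (Suc n))\<^sup>2 * (norm (g (Suc n) \<omega>))\<^sup>2"
proof -
  assume \<omega>: "\<omega> \<in> space M"
  have "z (Suc n) \<omega> - z n \<omega> = - ((\<kappa> * \<eta> (Suc n)) *\<^sub>R g (Suc n) \<omega>)" using z_Suc[OF \<omega>] by simp
  then show ?thesis using descent[of "z (Suc n) \<omega>" "z n \<omega>"] by (simp add: power_mult_distrib)
qed

lemma grad_z_sq_integrable_if:
  assumes "integrable M (\<lambda>\<omega>. f (z n \<omega>))"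
  shows "sq_integrable (\<lambda>\<omega>. grad (z n \<omega>))"
proof (rule integrable_if_abs_le)
  show "integrable M (\<lambda>\<omega>. 4 * K * (f (z n \<omega>) - f_inf))" using assms by simp
  show "(\<lambda>\<omega>. (norm (grad (z n \<omega>)))\<^sup>2) \<in> borel_measurable M" by measurable
  show "\<bar>(norm (grad (z n \<omega>)))\<^sup>2\<bar> \<le> 4 * K * (f (z n \<omega>) - f_inf)" for \<omega>
    using grad_norm_sq_le_gap[of "z n \<omega>"] by simp
qed

lemma f_z_integrable: "integrable M (\<lambda>\<omega>. f (z n \<omega>))"
proof (induction n)
  case 0
  obtain x1' where "\<forall>\<omega>\<in>space M. x 1 \<omega> = x1'" using x1 by blast
  then have "integrable M (\<lambda>\<omega>. f (z 0 \<omega>)) = integrable M (\<lambda>\<omega>. f x1')"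
    using z_0 by (intro Bochner_Integration.integrable_cong) auto
  then show ?case by simp
next
  case (Suc n)
  define e where "e = \<kappa> * \<eta> (Suc n)"
  have "0 \<le> e" unfolding e_def using \<kappa>_pos eta_pos[of "Suc n"] by simp
  have g_int: "sq_integrable (g (Suc n))" using g_sq_int by simp
  have "integrable M (\<lambda>\<omega>. grad (z n \<omega>) \<bullet> g (Suc n) \<omega>)"
  proof (rule integrable_if_le_norm_mult[OF grad_z_sq_integrable_if[OF Suc] g_int])
    show "\<bar>grad (z n \<omega>) \<bullet> g (Suc n) \<omega>\<bar> \<le> norm (grad (z n \<omega>)) * norm (g (Suc n) \<omega>)" for \<omega>
      by (rule Cauchy_Schwarz_ineq2)
  qed measurable
  then have q_int: "integrable M (\<lambda>\<omega>. \<bar>f_inf\<bar> + \<bar>f (z n \<omega>)\<bar> + e * \<bar>grad (z n \<omega>) \<bullet> g (Suc n) \<omega>\<bar>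
      + K * e\<^sup>2 * (norm (g (Suc n) \<omega>))\<^sup>2)"
    using Suc g_int by auto
  have bound: "\<bar>f (z (Suc n) \<omega>)\<bar> \<le> \<bar>f_inf\<bar> + \<bar>f (z n \<omega>)\<bar> + e * \<bar>grad (z n \<omega>) \<bullet> g (Suc n) \<omega>\<bar>
      + K * e\<^sup>2 * (norm (g (Suc n) \<omega>))\<^sup>2" if "\<omega> \<in> space M" for \<omega>
  proof -
    have "- (e * (grad (z n \<omega>) \<bullet> g (Suc n) \<omega>)) \<le> e * \<bar>grad (z n \<omega>) \<bullet> g (Suc n) \<omega>\<bar>"
      using mult_left_mono[OF abs_ge_minus_self[of "grad (z n \<omega>) \<bullet> g (Suc n) \<omega>"] \<open>0 \<le> e\<close>] by simp
    then have "f (z (Suc n) \<omega>) \<le> f (z n \<omega>) + e * \<bar>grad (z n \<omega>) \<bullet> g (Suc n) \<omega>\<bar>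
        + K * e\<^sup>2 * (norm (g (Suc n) \<omega>))\<^sup>2"
      using f_z_Suc_le[OF that, of n] unfolding e_def by linarith
    moreover have "0 \<le> e * \<bar>grad (z n \<omega>) \<bullet> g (Suc n) \<omega>\<bar>" "0 \<le> K * e\<^sup>2 * (norm (g (Suc n) \<omega>))\<^sup>2"
      using \<open>0 \<le> e\<close> K_pos by simp_all
    ultimately show ?thesis
      using f_inf_le[of "z (Suc n) \<omega>"] abs_ge_self[of "f (z n \<omega>)"] abs_ge_minus_self[of f_inf]
        abs_ge_zero[of "f (z n \<omega>)"] abs_ge_zero[of f_inf]
      unfolding abs_le_iff by (intro conjI) linarith+
  qed
  show ?case by (rule integrable_if_abs_le[OF q_int _ bound]) measurable
qed

lemma grad_z_sq_integrable: "sq_integrable (\<lambda>\<omega>. grad (z n \<omega>))"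
  using grad_z_sq_integrable_if[OF f_z_integrable] .

lemma grad_x_sq_integrable: "sq_integrable (\<lambda>\<omega>. grad (x (Suc n) \<omega>))"
proof (rule integrable_if_abs_le)
  show "integrable M (\<lambda>\<omega>. 2 * (norm (grad (z n \<omega>)))\<^sup>2 + 2 * (K * \<gamma>)\<^sup>2 * (norm (m n \<omega>))\<^sup>2)"
    using grad_z_sq_integrable[of n] m_second_moment[of n] by simp
  show "(\<lambda>\<omega>. (norm (grad (x (Suc n) \<omega>)))\<^sup>2) \<in> borel_measurable M" by measurable
  show "\<bar>(norm (grad (x (Suc n) \<omega>)))\<^sup>2\<bar> \<le> 2 * (norm (grad (z n \<omega>)))\<^sup>2 + 2 * (K * \<gamma>)\<^sup>2 * (norm (m n \<omega>))\<^sup>2"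
    for \<omega> using grad_x_sq_le[of n \<omega>] by simp
qed

definition f_mean :: "nat \<Rightarrow> real" where "f_mean n = integral\<^sup>L M (\<lambda>\<omega>. f (z n \<omega>))"

definition grad_sq_mean :: "nat \<Rightarrow> real" where
  "grad_sq_mean n = mean_sq (\<lambda>\<omega>. grad (x (Suc n) \<omega>))"

definition descent_error :: "nat \<Rightarrow> real" where
  "descent_error n = \<kappa> * \<eta> (Suc n) * (K * \<gamma>)\<^sup>2 * G\<^sup>2 * (h n)\<^sup>2 / 2 + K * \<kappa>\<^sup>2 * (\<eta> (Suc n))\<^sup>2 * G\<^sup>2"

lemma inner_grad_z_grad_x_ge:
  "(norm (grad (x (Suc n) \<omega>)))\<^sup>2 / 2 - (K * \<gamma>)\<^sup>2 * (norm (m n \<omega>))\<^sup>2 / 2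
    \<le> grad (z n \<omega>) \<bullet> grad (x (Suc n) \<omega>)"
proof -
  define p where "p = grad (z n \<omega>)"
  define q where "q = grad (x (Suc n) \<omega>)"
  have "(norm p)\<^sup>2 + (norm q)\<^sup>2 - 2 * (p \<bullet> q) = (norm (q - p))\<^sup>2"
    by (simp add: power2_norm_eq_inner inner_diff_left inner_diff_right inner_commute)
  also have "\<dots> \<le> (K * \<gamma> * norm (m n \<omega>))\<^sup>2"
    using norm_grad_x_minus_grad_z[of n \<omega>] unfolding p_def q_def by (intro power_mono) auto
  also have "\<dots> = (K * \<gamma>)\<^sup>2 * (norm (m n \<omega>))\<^sup>2" by (simp add: power_mult_distrib)
  finally show ?thesis
    using zero_le_power2[of "norm p"] unfolding p_def[symmetric] q_def[symmetric] by linarith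
qed

lemma mean_inner_grad_z_g:
  shows "integrable M (\<lambda>\<omega>. grad (z n \<omega>) \<bullet> g (Suc n) \<omega>)"
    and "grad_sq_mean n / 2 - (K * \<gamma>)\<^sup>2 * (G\<^sup>2 * (h n)\<^sup>2) / 2
      \<le> integral\<^sup>L M (\<lambda>\<omega>. grad (z n \<omega>) \<bullet> g (Suc n) \<omega>)"
proof -
  have "(\<lambda>\<omega>. grad (z n \<omega>)) \<in> borel_measurable (hist M g (Suc n))"
    using z_measurable_hist[of n] by measurable
  note unbiased = integral_inner_unbiased[of "Suc n", OF _ this grad_z_sq_integrable grad_x_sq_integrable]
  show "integrable M (\<lambda>\<omega>. grad (z n \<omega>) \<bullet> g (Suc n) \<omega>)" using unbiased(1) by simp
  have m_int: "sq_integrable (m n)" and m_le: "mean_sq (m n) \<le> G\<^sup>2 * (h n)\<^sup>2"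
    using m_second_moment[of n] by auto
  have "grad_sq_mean n / 2 - (K * \<gamma>)\<^sup>2 * (G\<^sup>2 * (h n)\<^sup>2) / 2
      \<le> grad_sq_mean n / 2 - (K * \<gamma>)\<^sup>2 * mean_sq (m n) / 2"
    using m_le by (simp add: mult_left_mono)
  also have "\<dots> = integral\<^sup>L M (\<lambda>\<omega>. (norm (grad (x (Suc n) \<omega>)))\<^sup>2 / 2 - (K * \<gamma>)\<^sup>2 * (norm (m n \<omega>))\<^sup>2 / 2)"
    unfolding grad_sq_mean_def using grad_x_sq_integrable m_int by simp
  also have "\<dots> \<le> integral\<^sup>L M (\<lambda>\<omega>. grad (z n \<omega>) \<bullet> grad (x (Suc n) \<omega>))"
    using inner_grad_z_grad_x_ge unbiased(2) grad_x_sq_integrable m_int by (intro integral_mono) auto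
  also have "\<dots> = integral\<^sup>L M (\<lambda>\<omega>. grad (z n \<omega>) \<bullet> g (Suc n) \<omega>)" using unbiased(3) by simp
  finally show "grad_sq_mean n / 2 - (K * \<gamma>)\<^sup>2 * (G\<^sup>2 * (h n)\<^sup>2) / 2
      \<le> integral\<^sup>L M (\<lambda>\<omega>. grad (z n \<omega>) \<bullet> g (Suc n) \<omega>)" .
qed

lemma f_mean_Suc_le:
  "f_mean (Suc n) \<le> f_mean n - \<kappa> / 2 * \<eta> (Suc n) * grad_sq_mean n + descent_error n"
proof -
  define e where "e = \<kappa> * \<eta> (Suc n)"
  have "0 \<le> e" unfolding e_def using \<kappa>_pos eta_pos[of "Suc n"] by simp
  have g_int: "sq_integrable (g (Suc n))" and g_le: "mean_sq (g (Suc n)) \<le> G\<^sup>2"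
    using g_sq_int g_bdd by simp_all
  note inner = mean_inner_grad_z_g[of n]
  have "f_mean (Suc n) \<le> integral\<^sup>L M (\<lambda>\<omega>. f (z n \<omega>) - e * (grad (z n \<omega>) \<bullet> g (Suc n) \<omega>)
      + K * e\<^sup>2 * (norm (g (Suc n) \<omega>))\<^sup>2)"
    unfolding f_mean_def e_def using f_z_Suc_le f_z_integrable inner(1) g_int by (intro integral_mono) auto
  also have "\<dots> = f_mean n - e * integral\<^sup>L M (\<lambda>\<omega>. grad (z n \<omega>) \<bullet> g (Suc n) \<omega>) + K * e\<^sup>2 * mean_sq (g (Suc n))"
    unfolding f_mean_def using f_z_integrable inner(1) g_int by simp
  also have "\<dots> \<le> f_mean n - e * (grad_sq_mean n / 2 - (K * \<gamma>)\<^sup>2 * (G\<^sup>2 * (h n)\<^sup>2) / 2) + K * e\<^sup>2 * G\<^sup>2"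
  proof -
    have "K * e\<^sup>2 * mean_sq (g (Suc n)) \<le> K * e\<^sup>2 * G\<^sup>2"
      by (rule mult_left_mono[OF g_le]) (use K_pos in simp)
    then show ?thesis using mult_left_mono[OF inner(2) \<open>0 \<le> e\<close>] by linarith
  qed
  also have "\<dots> = f_mean n - \<kappa> / 2 * \<eta> (Suc n) * grad_sq_mean n + descent_error n"
    unfolding descent_error_def e_def by (simp add: algebra_simps power_mult_distrib)
  finally show ?thesis .
qed

lemma x_Suc_Suc_minus_x_Suc:
  "\<omega> \<in> space M \<Longrightarrow> x (Suc (Suc n)) \<omega> - x (Suc n) \<omega>
    = (c * \<mu>) *\<^sub>R m n \<omega> - ((lam + c) * \<eta> (Suc n)) *\<^sub>R g (Suc n) \<omega>"
  using x_step[of "Suc n" \<omega>] m_step[of "Suc n" \<omega>] unfolding c_def by (simp add: algebra_simps)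

lemma norm_x_increment_sq_le:
  assumes "\<omega> \<in> space M"
  shows "(norm (x (Suc (Suc n)) \<omega> - x (Suc n) \<omega>))\<^sup>2
    \<le> 2 * (c * \<mu>)\<^sup>2 * (norm (m n \<omega>))\<^sup>2 + 2 * ((lam + c) * \<eta> (Suc n))\<^sup>2 * (norm (g (Suc n) \<omega>))\<^sup>2"
proof -
  define u where "u = c * \<mu> * norm (m n \<omega>)"
  define v where "v = (lam + c) * \<eta> (Suc n) * norm (g (Suc n) \<omega>)"
  have "0 \<le> c * \<mu>" "0 \<le> (lam + c) * \<eta> (Suc n)"
    using c_nonneg mu lam eta_pos[of "Suc n"] by simp_all
  then have "norm (x (Suc (Suc n)) \<omega> - x (Suc n) \<omega>) \<le> u + v"
    unfolding x_Suc_Suc_minus_x_Suc[OF assms] u_def v_def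
    using norm_triangle_ineq4[of "(c * \<mu>) *\<^sub>R m n \<omega>" "((lam + c) * \<eta> (Suc n)) *\<^sub>R g (Suc n) \<omega>"] by simp
  then have "(norm (x (Suc (Suc n)) \<omega> - x (Suc n) \<omega>))\<^sup>2 \<le> (u + v)\<^sup>2" by (intro power_mono) auto
  also have "\<dots> \<le> 2 * u\<^sup>2 + 2 * v\<^sup>2"
    using sum_squares_bound[of u v] by (simp add: power2_eq_square algebra_simps)
  finally show ?thesis unfolding u_def v_def by (simp add: power_mult_distrib)
qed

lemma grad_x_Suc_sq_le:
  "(norm (grad (x (Suc (Suc n)) \<omega>)))\<^sup>2 \<le> (1 + K * \<eta> (Suc n)) * (norm (grad (x (Suc n) \<omega>)))\<^sup>2
     + (K / \<eta> (Suc n) + K\<^sup>2) * (norm (x (Suc (Suc n)) \<omega> - x (Suc n) \<omega>))\<^sup>2"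
proof -
  define e where "e = \<eta> (Suc n)"
  define p where "p = norm (grad (x (Suc n) \<omega>))"
  define d where "d = norm (x (Suc (Suc n)) \<omega> - x (Suc n) \<omega>)"
  have "0 < e" unfolding e_def using eta_pos by simp
  have "norm (grad (x (Suc (Suc n)) \<omega>)) \<le> p + K * d"
    using norm_triangle_ineq2[of "grad (x (Suc (Suc n)) \<omega>)" "grad (x (Suc n) \<omega>)"]
      grad_lipschitz[of "x (Suc (Suc n)) \<omega>" "x (Suc n) \<omega>"] unfolding p_def d_def by simp
  then have "(norm (grad (x (Suc (Suc n)) \<omega>)))\<^sup>2 \<le> (p + K * d)\<^sup>2" by (intro power_mono) auto
  also have "\<dots> = p\<^sup>2 + K * (2 * p * d) + K\<^sup>2 * d\<^sup>2" by (simp add: power2_eq_square algebra_simps)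
  also have "\<dots> \<le> p\<^sup>2 + K * (e * p\<^sup>2 + d\<^sup>2 / e) + K\<^sup>2 * d\<^sup>2"
    using two_mult_le_weighted_squares[OF \<open>0 < e\<close>, of p d] K_pos by (intro add_mono mult_left_mono) auto
  also have "\<dots> = (1 + K * e) * p\<^sup>2 + (K / e + K\<^sup>2) * d\<^sup>2" by (simp add: algebra_simps)
  finally show ?thesis unfolding e_def p_def d_def .
qed

lemma grad_sq_mean_Suc_le:
  "grad_sq_mean (Suc n) \<le> (1 + K * \<eta> (Suc n)) * grad_sq_mean n
     + (K / \<eta> (Suc n) + K\<^sup>2) * (2 * (c * \<mu>)\<^sup>2 * (G\<^sup>2 * (h n)\<^sup>2) + 2 * ((lam + c) * \<eta> (Suc n))\<^sup>2 * G\<^sup>2)"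
proof -
  define e where "e = \<eta> (Suc n)"
  define k where "k = K / e + K\<^sup>2"
  have "0 \<le> k" unfolding k_def e_def using eta_pos[of "Suc n"] K_pos by simp
  have g_int: "sq_integrable (g (Suc n))" and g_le: "mean_sq (g (Suc n)) \<le> G\<^sup>2"
    using g_sq_int g_bdd by simp_all
  have m_int: "sq_integrable (m n)" and m_le: "mean_sq (m n) \<le> G\<^sup>2 * (h n)\<^sup>2"
    using m_second_moment[of n] by auto
  define R where "R \<omega> = (1 + K * e) * (norm (grad (x (Suc n) \<omega>)))\<^sup>2
     + k * (2 * (c * \<mu>)\<^sup>2 * (norm (m n \<omega>))\<^sup>2 + 2 * ((lam + c) * e)\<^sup>2 * (norm (g (Suc n) \<omega>))\<^sup>2)" for \<omega>
  have R_int: "integrable M R" unfolding R_def using grad_x_sq_integrable[of n] m_int g_int by auto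
  have "(norm (grad (x (Suc (Suc n)) \<omega>)))\<^sup>2 \<le> R \<omega>" if "\<omega> \<in> space M" for \<omega>
    using grad_x_Suc_sq_le[of n \<omega>] mult_left_mono[OF norm_x_increment_sq_le[OF that, of n] \<open>0 \<le> k\<close>]
    unfolding R_def e_def k_def by simp
  then have "grad_sq_mean (Suc n) \<le> integral\<^sup>L M R"
    unfolding grad_sq_mean_def using grad_x_sq_integrable[of "Suc n"] R_int by (intro integral_mono) auto
  also have "\<dots> = (1 + K * e) * grad_sq_mean n + k * (2 * (c * \<mu>)\<^sup>2 * mean_sq (m n)
      + 2 * ((lam + c) * e)\<^sup>2 * mean_sq (g (Suc n)))"
    unfolding R_def grad_sq_mean_def using grad_x_sq_integrable[of n] m_int g_int by simp
  also have "\<dots> \<le> (1 + K * e) * grad_sq_mean n + k * (2 * (c * \<mu>)\<^sup>2 * (G\<^sup>2 * (h n)\<^sup>2) + 2 * ((lam + c) * e)\<^sup>2 * G\<^sup>2)"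
    using m_le g_le \<open>0 \<le> k\<close> by (intro add_mono mult_left_mono order_refl) auto
  finally show ?thesis unfolding k_def e_def .
qed

lemma eta_Suc_tendsto_zero: "(\<lambda>t. \<eta> (Suc t)) \<longlonglongrightarrow> 0"
proof -
  have "(\<lambda>t. sqrt ((\<eta> (t + 1))\<^sup>2)) \<longlonglongrightarrow> sqrt 0"
    by (intro tendsto_real_sqrt summable_LIMSEQ_zero[OF eta_sq])
  moreover have "sqrt ((\<eta> (t + 1))\<^sup>2) = \<eta> (Suc t)" for t using eta_pos[of "Suc t"] by simp
  ultimately show ?thesis by simp
qed

lemma eta_Suc_bounded: "\<exists>E>0. \<forall>t. \<eta> (Suc t) \<le> E"
proof -
  have "Bseq (\<lambda>t. \<eta> (Suc t))" using convergent_imp_Bseq[OF convergentI[OF eta_Suc_tendsto_zero]] .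
  then obtain E where "0 < E" "\<And>t. norm (\<eta> (Suc t)) \<le> E" by (auto elim: BseqE)
  then show ?thesis by (metis abs_le_D1 real_norm_def)
qed

lemma h_sq_le_eta_sq: "\<exists>B\<ge>0. \<forall>\<^sub>F n in sequentially. (h n)\<^sup>2 \<le> B * (\<eta> (Suc n))\<^sup>2"
proof -
  obtain B where "\<forall>\<^sub>F n in sequentially. h n \<le> B * \<eta> (Suc n)"
    using momentum_sum_le_step[OF mu(1) eta_pos mu(2) eta_ratio] by blast
  then have "\<forall>\<^sub>F n in sequentially. (h n)\<^sup>2 \<le> B\<^sup>2 * (\<eta> (Suc n))\<^sup>2"
    by eventually_elim (use h_nonneg in \<open>simp add: power_mono flip: power_mult_distrib\<close>)
  then show ?thesis by (intro exI[of _ "B\<^sup>2"]) simp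
qed

lemma descent_error_nonneg: "0 \<le> descent_error n"
  unfolding descent_error_def using \<kappa>_pos eta_pos[of "Suc n"] K_pos by simp

lemma descent_error_summable: "summable descent_error"
proof -
  obtain E where E: "0 < E" "\<And>t. \<eta> (Suc t) \<le> E" using eta_Suc_bounded by blast
  obtain B where "0 \<le> B" and B: "\<forall>\<^sub>F n in sequentially. (h n)\<^sup>2 \<le> B * (\<eta> (Suc n))\<^sup>2"
    using h_sq_le_eta_sq by blast
  define C where "C = \<kappa> * (K * \<gamma>)\<^sup>2 * G\<^sup>2 * E * B / 2 + K * \<kappa>\<^sup>2 * G\<^sup>2"
  have "summable (\<lambda>n. C * (\<eta> (Suc n))\<^sup>2)" using eta_sq by (intro summable_mult) simp
  moreover have "\<forall>\<^sub>F n in sequentially. norm (descent_error n) \<le> C * (\<eta> (Suc n))\<^sup>2"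
    using B
  proof eventually_elim
    case (elim n)
    have "\<eta> (Suc n) * (h n)\<^sup>2 \<le> E * (B * (\<eta> (Suc n))\<^sup>2)"
      using elim E(2)[of n] eta_pos[of "Suc n"] \<open>0 \<le> B\<close> by (intro mult_mono) auto
    then have "\<kappa> * (K * \<gamma>)\<^sup>2 * G\<^sup>2 / 2 * (\<eta> (Suc n) * (h n)\<^sup>2)
        \<le> \<kappa> * (K * \<gamma>)\<^sup>2 * G\<^sup>2 / 2 * (E * (B * (\<eta> (Suc n))\<^sup>2))"
      using \<kappa>_pos by (intro mult_left_mono) auto
    then show ?case
      using descent_error_nonneg[of n] unfolding descent_error_def C_def by (simp add: algebra_simps)
  qed
  ultimately show ?thesis by (rule summable_comparison_test_ev[rotated])
qed

lemma f_mean_ge: "f_inf \<le> f_mean n"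
proof -
  have "integral\<^sup>L M (\<lambda>_. f_inf) \<le> f_mean n"
    unfolding f_mean_def using f_z_integrable f_inf_le by (intro integral_mono) auto
  then show ?thesis by (simp add: prob_space)
qed

lemma f_mean_telescope:
  "f_mean T + \<kappa> / 2 * (\<Sum>n<T. \<eta> (Suc n) * grad_sq_mean n) \<le> f_mean 0 + (\<Sum>n<T. descent_error n)"
proof (induction T)
  case (Suc T)
  then show ?case using f_mean_Suc_le[of T] by (simp add: algebra_simps)
qed simp

lemma grad_sq_mean_nonneg: "0 \<le> grad_sq_mean n"
  unfolding grad_sq_mean_def by simp

lemma weighted_grad_sq_summable: "summable (\<lambda>n. \<eta> (Suc n) * grad_sq_mean n)"
proof (rule bounded_imp_summable)
  show "0 \<le> \<eta> (Suc n) * grad_sq_mean n" for n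
    using eta_pos[of "Suc n"] grad_sq_mean_nonneg[of n] by simp
  show "(\<Sum>k\<le>n. \<eta> (Suc k) * grad_sq_mean k) \<le> 2 / \<kappa> * (f_mean 0 + suminf descent_error - f_inf)" for n
  proof -
    have "(\<Sum>k<Suc n. descent_error k) \<le> suminf descent_error"
      using descent_error_summable descent_error_nonneg by (intro sum_le_suminf) auto
    then have "\<kappa> / 2 * (\<Sum>k<Suc n. \<eta> (Suc k) * grad_sq_mean k) \<le> f_mean 0 + suminf descent_error - f_inf"
      using f_mean_telescope[of "Suc n"] f_mean_ge[of "Suc n"] by linarith
    then show ?thesis using \<kappa>_pos by (simp add: field_simps lessThan_Suc_atMost)
  qed
qed

lemma f_mean_le: "f_mean n \<le> f_mean 0 + suminf descent_error"
proof -
  have "0 \<le> \<kappa> / 2 * (\<Sum>k<n. \<eta> (Suc k) * grad_sq_mean k)"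
    using \<kappa>_pos eta_pos grad_sq_mean_nonneg by (intro mult_nonneg_nonneg sum_nonneg) (auto intro: less_imp_le)
  moreover have "(\<Sum>k<n. descent_error k) \<le> suminf descent_error"
    using descent_error_summable descent_error_nonneg by (intro sum_le_suminf) auto
  ultimately show ?thesis using f_mean_telescope[of n] by linarith
qed

lemma grad_sq_mean_le_f_gap:
  "grad_sq_mean n \<le> 8 * K * (f_mean n - f_inf) + 2 * (K * \<gamma>)\<^sup>2 * (G\<^sup>2 * (h n)\<^sup>2)"
proof -
  have m_int: "sq_integrable (m n)" and m_le: "mean_sq (m n) \<le> G\<^sup>2 * (h n)\<^sup>2"
    using m_second_moment[of n] by auto
  have "mean_sq (\<lambda>\<omega>. grad (z n \<omega>)) \<le> integral\<^sup>L M (\<lambda>\<omega>. 4 * K * (f (z n \<omega>) - f_inf))"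
    using grad_norm_sq_le_gap grad_z_sq_integrable f_z_integrable by (intro integral_mono) auto
  also have "\<dots> = 4 * K * (f_mean n - f_inf)" unfolding f_mean_def using f_z_integrable by (simp add: prob_space)
  finally have z_le: "mean_sq (\<lambda>\<omega>. grad (z n \<omega>)) \<le> 4 * K * (f_mean n - f_inf)" .
  have "grad_sq_mean n \<le> integral\<^sup>L M (\<lambda>\<omega>. 2 * (norm (grad (z n \<omega>)))\<^sup>2 + 2 * (K * \<gamma>)\<^sup>2 * (norm (m n \<omega>))\<^sup>2)"
    unfolding grad_sq_mean_def using grad_x_sq_le grad_x_sq_integrable grad_z_sq_integrable m_int
    by (intro integral_mono) auto
  also have "\<dots> = 2 * mean_sq (\<lambda>\<omega>. grad (z n \<omega>)) + 2 * (K * \<gamma>)\<^sup>2 * mean_sq (m n)"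
    using grad_z_sq_integrable m_int by simp
  also have "\<dots> \<le> 8 * K * (f_mean n - f_inf) + 2 * (K * \<gamma>)\<^sup>2 * (G\<^sup>2 * (h n)\<^sup>2)"
    using z_le mult_left_mono[OF m_le, of "2 * (K * \<gamma>)\<^sup>2"] by simp
  finally show ?thesis .
qed

lemma grad_sq_mean_bounded: "\<exists>A. \<forall>n. grad_sq_mean n \<le> A"
proof -
  obtain E where E: "0 < E" "\<And>t. \<eta> (Suc t) \<le> E" using eta_Suc_bounded by blast
  define H where "H = E / (1 - \<mu>)"
  have "h n \<le> H" for n
    unfolding H_def by (rule momentum_sum_le[of \<mu> \<eta> E]) (use mu eta_pos E(2) in auto)
  then have "(h n)\<^sup>2 \<le> H\<^sup>2" for n using h_nonneg by (intro power_mono)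
  then have "grad_sq_mean n \<le> 8 * K * (f_mean 0 + suminf descent_error - f_inf) + 2 * (K * \<gamma>)\<^sup>2 * (G\<^sup>2 * H\<^sup>2)" for n
  proof -
    have "8 * K * (f_mean n - f_inf) \<le> 8 * K * (f_mean 0 + suminf descent_error - f_inf)"
      using f_mean_le[of n] K_pos by simp
    moreover have "2 * (K * \<gamma>)\<^sup>2 * (G\<^sup>2 * (h n)\<^sup>2) \<le> 2 * (K * \<gamma>)\<^sup>2 * (G\<^sup>2 * H\<^sup>2)"
      using \<open>(h n)\<^sup>2 \<le> H\<^sup>2\<close> by (intro mult_left_mono) auto
    ultimately show ?thesis using grad_sq_mean_le_f_gap[of n] by linarith
  qed
  then show ?thesis by blast
qed

lemma grad_sq_mean_increment: "\<exists>C. \<forall>\<^sub>F n in sequentially. grad_sq_mean (Suc n) \<le> grad_sq_mean n + C * \<eta> (Suc n)"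
proof -
  obtain E where E: "0 < E" "\<And>t. \<eta> (Suc t) \<le> E" using eta_Suc_bounded by blast
  obtain A where A: "\<And>n. grad_sq_mean n \<le> A" using grad_sq_mean_bounded by blast
  obtain B where "0 \<le> B" and B: "\<forall>\<^sub>F n in sequentially. (h n)\<^sup>2 \<le> B * (\<eta> (Suc n))\<^sup>2"
    using h_sq_le_eta_sq by blast
  define Q where "Q = 2 * (c * \<mu>)\<^sup>2 * G\<^sup>2 * B + 2 * (lam + c)\<^sup>2 * G\<^sup>2"
  have "0 \<le> Q" unfolding Q_def using \<open>0 \<le> B\<close> by simp
  have "\<forall>\<^sub>F n in sequentially. grad_sq_mean (Suc n) \<le> grad_sq_mean n + (K * A + (K + K\<^sup>2 * E) * Q) * \<eta> (Suc n)"
    using B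
  proof eventually_elim
    case (elim n)
    define e where "e = \<eta> (Suc n)"
    have "0 < e" "e \<le> E" unfolding e_def using eta_pos E(2) by auto
    have "2 * (c * \<mu>)\<^sup>2 * (G\<^sup>2 * (h n)\<^sup>2) \<le> 2 * (c * \<mu>)\<^sup>2 * G\<^sup>2 * B * e\<^sup>2"
      using mult_left_mono[OF elim, of "2 * (c * \<mu>)\<^sup>2 * G\<^sup>2"] unfolding e_def by (simp add: ac_simps)
    moreover have "2 * ((lam + c) * e)\<^sup>2 * G\<^sup>2 = 2 * (lam + c)\<^sup>2 * G\<^sup>2 * e\<^sup>2"
      by (simp add: power_mult_distrib)
    moreover have "Q * e\<^sup>2 = 2 * (c * \<mu>)\<^sup>2 * G\<^sup>2 * B * e\<^sup>2 + 2 * (lam + c)\<^sup>2 * G\<^sup>2 * e\<^sup>2"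
      unfolding Q_def by (simp add: algebra_simps)
    ultimately have "2 * (c * \<mu>)\<^sup>2 * (G\<^sup>2 * (h n)\<^sup>2) + 2 * ((lam + c) * e)\<^sup>2 * G\<^sup>2 \<le> Q * e\<^sup>2"
      by linarith
    then have "(K / e + K\<^sup>2) * (2 * (c * \<mu>)\<^sup>2 * (G\<^sup>2 * (h n)\<^sup>2) + 2 * ((lam + c) * e)\<^sup>2 * G\<^sup>2)
        \<le> (K / e + K\<^sup>2) * (Q * e\<^sup>2)"
      using \<open>0 < e\<close> K_pos by (intro mult_left_mono) auto
    also have "\<dots> = (K + K\<^sup>2 * e) * Q * e"
      using \<open>0 < e\<close> by (simp add: field_simps power2_eq_square)
    also have "\<dots> \<le> (K + K\<^sup>2 * E) * Q * e"
      using \<open>e \<le> E\<close> \<open>0 < e\<close> \<open>0 \<le> Q\<close> K_pos by (intro mult_right_mono add_left_mono mult_left_mono) auto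
    finally have "(K / e + K\<^sup>2) * (2 * (c * \<mu>)\<^sup>2 * (G\<^sup>2 * (h n)\<^sup>2) + 2 * ((lam + c) * e)\<^sup>2 * G\<^sup>2)
        \<le> (K + K\<^sup>2 * E) * Q * e" .
    moreover have "K * e * grad_sq_mean n \<le> K * e * A"
      using A[of n] \<open>0 < e\<close> K_pos by (intro mult_left_mono) auto
    ultimately show ?case
      using grad_sq_mean_Suc_le[of n] unfolding e_def[symmetric] by (simp add: algebra_simps)
  qed
  then show ?thesis by blast
qed

lemma grad_sq_mean_tendsto_zero: "grad_sq_mean \<longlonglongrightarrow> 0"
proof -
  obtain C where "\<forall>\<^sub>F n in sequentially. grad_sq_mean (Suc n) \<le> grad_sq_mean n + C * \<eta> (Suc n)"
    using grad_sq_mean_increment by blast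
  moreover have "\<not> summable (\<lambda>t. \<eta> (Suc t))" using eta_div by simp
  ultimately show ?thesis
    using tendsto_zero_if_weighted_summable[OF grad_sq_mean_nonneg _ weighted_grad_sq_summable]
      eta_pos eta_Suc_tendsto_zero by simp
qed

end

theorem corollary3p2:
  fixes M :: "'w measure"
    and f :: "'a::euclidean_space \<Rightarrow> real"
    and grad :: "'a \<Rightarrow> 'a"
    and L G \<mu> lam :: real
    and \<eta> :: "nat \<Rightarrow> real"
    and g x m :: "nat \<Rightarrow> 'w \<Rightarrow> 'a"
  assumes M: "prob_space M"
    and f_grad: "\<And>z. (f has_derivative (\<lambda>h. grad z \<bullet> h)) (at z)"
    and f_bdd: "bdd_below (range f)"
    and Lip: "\<And>y z. norm (grad y - grad z) \<le> L * norm (y - z)"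
    and mu: "0 \<le> \<mu>" "\<mu> < 1"
    and lam: "0 \<le> lam" "lam \<le> 1 / (1 - \<mu>)"
    and eta_pos: "\<And>t. t \<ge> 1 \<Longrightarrow> \<eta> t > 0"
    and eta_div: "\<not> summable (\<lambda>t. \<eta> (t + 1))"
    and eta_sq: "summable (\<lambda>t. (\<eta> (t + 1))\<^sup>2)"
    and eta_ratio: "(\<lambda>t. \<eta> t / \<eta> (t + 1)) \<longlonglongrightarrow> 1"
    and x1: "\<exists>x1. \<forall>\<omega>\<in>space M. x 1 \<omega> = x1"
    and m0: "\<forall>\<omega>\<in>space M. m 0 \<omega> = 0"
    and m_step: "\<And>t \<omega>. t \<ge> 1 \<Longrightarrow> \<omega> \<in> space M \<Longrightarrow>
                   m t \<omega> = \<mu> *\<^sub>R m (t - 1) \<omega> - \<eta> t *\<^sub>R g t \<omega>"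
    and x_step: "\<And>t \<omega>. t \<ge> 1 \<Longrightarrow> \<omega> \<in> space M \<Longrightarrow>
                   x (t + 1) \<omega> = x t \<omega> - (lam * \<eta> t) *\<^sub>R g t \<omega>
                                  + (1 - (1 - \<mu>) * lam) *\<^sub>R m t \<omega>"
    and g_meas: "\<And>t. t \<ge> 1 \<Longrightarrow> g t \<in> borel_measurable M"
    and g_unbiased: "\<And>t b. t \<ge> 1 \<Longrightarrow> b \<in> Basis \<Longrightarrow>
                   AE \<omega> in M. real_cond_exp M (hist M g t) (\<lambda>\<omega>. g t \<omega> \<bullet> b) \<omega>
                                = grad (x t \<omega>) \<bullet> b"
    and g_sq_int: "\<And>t. t \<ge> 1 \<Longrightarrow> integrable M (\<lambda>\<omega>. (norm (g t \<omega>))\<^sup>2)"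
    and g_bdd: "\<And>t. t \<ge> 1 \<Longrightarrow> integral\<^sup>L M (\<lambda>\<omega>. (norm (g t \<omega>))\<^sup>2) \<le> G\<^sup>2"
  shows "(\<forall>t\<ge>1. integrable M (\<lambda>\<omega>. (norm (grad (x t \<omega>)))\<^sup>2))
    \<and> (\<lambda>T. Min ((\<lambda>t. integral\<^sup>L M (\<lambda>\<omega>. (norm (grad (x t \<omega>)))\<^sup>2)) ` {1..T}))
         \<longlonglongrightarrow> 0
    \<and> (\<lambda>T. (\<Sum>t=1..T. integral\<^sup>L M (\<lambda>\<omega>. (norm (grad (x t \<omega>)))\<^sup>2)) / real T)
         \<longlonglongrightarrow> 0"
proof -
  interpret sum_iteration M f grad L G \<mu> lam \<eta> g x m
    by (rule sum_iteration.intro) (fact assms)+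
  define a where "a t = integral\<^sup>L M (\<lambda>\<omega>. (norm (grad (x t \<omega>)))\<^sup>2)" for t
  have "(\<lambda>n. a (Suc n)) \<longlonglongrightarrow> 0"
    using grad_sq_mean_tendsto_zero unfolding grad_sq_mean_def a_def .
  then have a_lim: "a \<longlonglongrightarrow> 0" by (rule LIMSEQ_imp_Suc)
  have "0 \<le> a t" for t unfolding a_def by simp
  then have "(\<lambda>T. Min (a ` {1..T})) \<longlonglongrightarrow> 0" by (rule running_min_tendsto_zero[OF _ a_lim])
  moreover have "(\<lambda>T. (\<Sum>t=1..T. a t) / real T) \<longlonglongrightarrow> 0" by (rule cesaro_mean_tendsto_zero[OF a_lim])
  moreover have "\<forall>t\<ge>1. integrable M (\<lambda>\<omega>. (norm (grad (x t \<omega>)))\<^sup>2)"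
  proof (intro allI impI)
    fix t :: nat assume "1 \<le> t"
    then obtain n where "t = Suc n" by (cases t) auto
    then show "integrable M (\<lambda>\<omega>. (norm (grad (x t \<omega>)))\<^sup>2)" using grad_x_sq_integrable[of n] by simp
  qed
  ultimately show ?thesis unfolding a_def by simp
qed

end
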